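(* Let $g$ be a smooth function of one variable and consider, on the loop space of smooth maps $u:S^1\to\mathbb{R}$, the Poisson bivectors of hydrodynamic type $\omega_1=\delta'(x-y)$ and $\omega_2=g(u)\delta'(x-y)+\frac12 g'(u)u_x\delta(x-y)$. If the pencil $\omega_2-\lambda\omega_1$ is exact, i.e. there exists a local evolutionary vector field $X$ with $\mathrm{Lie}_X\omega_1=0$ and $\mathrm{Lie}_X\omega_2=\omega_1$, then there are constants $a,b$ such that $g(u)=au+b$, i.e. the pencil has the form $$(au+b)\delta'(x-y)+\frac12 a u_x\delta(x-y)-\lambda\delta'(x-y).$$
   Context: Scalar case ($u$ a single function, periodic in $x$). A local evolutionary vector field is $X=\sum_{s\ge0}\partial_x^s\xi\,\frac{\partial}{\partial u_{(s)}}$ with $\xi$ a differential polynomial in $u$. The Lie derivative of a local bivector with respect to $X$ is the Schouten bracket with $X$ (for $\omega_1=\delta'$ and $X$ with characteristic $\xi$, $\mathrm{Lie}_X\omega_1$ is the operator $-\xi_*\circ\partial_x-\partial_x\circ\xi_*^\dagger$, where $\xi_*=\sum_k\frac{\partial\xi}{\partial u_{(k)}}\partial_x^k$ is the Fréchet derivative and $\dagger$ the formal adjoint, with an operator $\sum_t a_t\partial_x^t$ identified with the bivector $\sum_t a_t\delta^{(t)}(x-y)$). Exactness of a pencil $\omega_2-\lambda\omega_1$: there is a vector field $X$ with $\mathrm{Lie}_X\omega_2=\omega_1\neq0$ and $\mathrm{Lie}_X\omega_1=0$. *)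

theory Defs
  imports "HOL-Analysis.Analysis"
begin

definition smooth :: "(real \<Rightarrow> real) \<Rightarrow> bool" where
  "smooth f \<longleftrightarrow> (\<forall>n x. ((deriv ^^ n) f) differentiable (at x))"

text \<open>Smooth loops S^1 -> R, with S^1 = R/Z (period 1).\<close>
definition loop :: "(real \<Rightarrow> real) \<Rightarrow> bool" where
  "loop u \<longleftrightarrow> smooth u \<and> (\<forall>x. u (x + 1) = u x)"

text \<open>Jet coordinates: j k stands for u_(k).\<close>
definition jet :: "(real \<Rightarrow> real) \<Rightarrow> real \<Rightarrow> nat \<Rightarrow> real" where
  "jet u x = (\<lambda>k. (deriv ^^ k) u x)"

definition ev :: "((nat \<Rightarrow> real) \<Rightarrow> real) \<Rightarrow> (real \<Rightarrow> real) \<Rightarrow> real \<Rightarrow> real" where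
  "ev F u = (\<lambda>x. F (jet u x))"

definition pd :: "nat \<Rightarrow> ((nat \<Rightarrow> real) \<Rightarrow> real) \<Rightarrow> (nat \<Rightarrow> real) \<Rightarrow> real" where
  "pd k F j = deriv (\<lambda>t. F (j(k := t))) (j k)"

text \<open>A differential polynomial: finite sum of terms c(u) * u_(1)^m_0 * ... * u_(n)^m_(n-1),
  with smooth coefficients c.\<close>
type_synonym dpoly = "((real \<Rightarrow> real) \<times> nat list) list"

definition dp_eval :: "dpoly \<Rightarrow> (nat \<Rightarrow> real) \<Rightarrow> real" where
  "dp_eval P j = (\<Sum>(c, m) \<leftarrow> P. c (j 0) * (\<Prod>i < length m. j (Suc i) ^ (m ! i)))"

definition is_dpoly :: "dpoly \<Rightarrow> bool" where
  "is_dpoly P \<longleftrightarrow> (\<forall>(c, m) \<in> set P. smooth c)"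

definition dp_order :: "dpoly \<Rightarrow> nat" where
  "dp_order P = Max (insert 0 ((length \<circ> snd) ` set P))"

definition frechet :: "dpoly \<Rightarrow> (real \<Rightarrow> real) \<Rightarrow> (real \<Rightarrow> real) \<Rightarrow> real \<Rightarrow> real" where
  "frechet \<xi> u \<phi> = (\<lambda>x. \<Sum>k \<le> dp_order \<xi>. ev (pd k (dp_eval \<xi>)) u x * (deriv ^^ k) \<phi> x)"

definition frechet_adj :: "dpoly \<Rightarrow> (real \<Rightarrow> real) \<Rightarrow> (real \<Rightarrow> real) \<Rightarrow> real \<Rightarrow> real" where
  "frechet_adj \<xi> u \<phi> = (\<lambda>x. \<Sum>k \<le> dp_order \<xi>.
      (-1) ^ k * (deriv ^^ k) (\<lambda>y. ev (pd k (dp_eval \<xi>)) u y * \<phi> y) x)"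

text \<open>A local bivector sum_{t \<le> T} a_t delta^(t)(x-y), identified with the operator
  sum_{t \<le> T} a_t d_x^t; the coefficients a_t are differential functions depending on
  u_(0), ..., u_(M).  Represented by the triple (a, T, M).\<close>
type_synonym bivector = "(nat \<Rightarrow> (nat \<Rightarrow> real) \<Rightarrow> real) \<times> nat \<times> nat"

definition bv_op :: "bivector \<Rightarrow> (real \<Rightarrow> real) \<Rightarrow> (real \<Rightarrow> real) \<Rightarrow> real \<Rightarrow> real" where
  "bv_op P u \<phi> = (case P of (a, T, M) \<Rightarrow>
      (\<lambda>x. \<Sum>t \<le> T. ev (a t) u x * (deriv ^^ t) \<phi> x))"

text \<open>Lie derivative (Schouten bracket) of the bivector P along the evolutionary vector field
  with characteristic xi:  Lie_X P = X(P) - xi_* o P - P o xi_*^dagger,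
  where X(P) applies X to the coefficients: X(a_t) = sum_k (da_t/du_(k)) d_x^k xi.\<close>
definition lie :: "dpoly \<Rightarrow> bivector \<Rightarrow> (real \<Rightarrow> real) \<Rightarrow> (real \<Rightarrow> real) \<Rightarrow> real \<Rightarrow> real" where
  "lie \<xi> P u \<phi> = (case P of (a, T, M) \<Rightarrow>
      (\<lambda>x. (\<Sum>t \<le> T. (\<Sum>k \<le> M. ev (pd k (a t)) u x * (deriv ^^ k) (ev (dp_eval \<xi>) u) x)
                        * (deriv ^^ t) \<phi> x)
           - frechet \<xi> u (bv_op P u \<phi>) x
           - bv_op P u (frechet_adj \<xi> u \<phi>) x))"

definition omega1 :: bivector where
  "omega1 = ((\<lambda>t j. if t = 1 then 1 else 0), 1, 0)"

definition omega2 :: "(real \<Rightarrow> real) \<Rightarrow> bivector" where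
  "omega2 g = ((\<lambda>t j. if t = 1 then g (j 0) else if t = 0 then 1/2 * deriv g (j 0) * j 1 else 0), 1, 1)"

text \<open>Equality of (Lie derivatives of) local bivectors, tested on all loops u and test loops phi.\<close>
definition exact_pencil :: "(real \<Rightarrow> real) \<Rightarrow> bool" where
  "exact_pencil g \<longleftrightarrow> (\<exists>\<xi>. is_dpoly \<xi> \<and>
      (\<forall>u \<phi>. loop u \<longrightarrow> loop \<phi> \<longrightarrow> lie \<xi> (omega2 g) u \<phi> = bv_op omega1 u \<phi>) \<and>
      (\<forall>u \<phi>. loop u \<longrightarrow> loop \<phi> \<longrightarrow> lie \<xi> omega1 u \<phi> = (\<lambda>x. 0)))"

end

theory Submission
  imports Defs "HOL-Computational_Algebra.Polynomial"
begin

text \<open>Test both equations on constant loops u = c against phi(x) = sin(2 pi m x).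
  Along a constant loop the Frechet derivative of xi has constant coefficients
  p_k = d xi / d u_(k), and Lie_X omega_1 = 0 becomes sum_k (1 + (-1)^k) p_k phi^(k+1) = 0.
  At x = 0 this is a polynomial identity in m whose linear coefficient forces p_0 = 0, so
  xi takes a constant value K on constant jets. For such u the equation Lie_X omega_2 = omega_1
  reduces to g'(c) K phi' = phi', hence g' = 1/K and g is affine.\<close>

lemma higher_deriv_deriv: "(deriv ^^ n) (deriv f) = deriv ((deriv ^^ n) f)"
  by (metis comp_apply funpow.simps(2) funpow_Suc_right)

lemma smooth_deriv: "smooth f \<Longrightarrow> smooth (deriv f)"
  unfolding smooth_def higher_deriv_deriv by (metis funpow.simps(2) comp_apply)

lemma smooth_imp_field_differentiable:
  "smooth f \<Longrightarrow> (deriv ^^ n) f field_differentiable at x"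
  unfolding smooth_def field_differentiable_def
  by (metis DERIV_deriv_iff_real_differentiable)

lemma higher_deriv_cmult:
  assumes "smooth f"
  shows "(deriv ^^ n) (\<lambda>x. c * f x) = (\<lambda>x. c * (deriv ^^ n) f x)"
proof (induction n)
  case (Suc n)
  show ?case
    using Suc smooth_imp_field_differentiable[OF assms] by (simp add: deriv_cmult)
qed simp

lemma higher_deriv_const: "(deriv ^^ n) (\<lambda>x. c) = (\<lambda>x. if n = 0 then c else 0)"
  by (induction n) auto

lemma higher_deriv_sin:
  "(deriv ^^ n) (\<lambda>x. sin (a * x)) = (\<lambda>x. a ^ n * sin (a * x + real n * (pi / 2)))"
proof (induction n)
  case (Suc n)
  have "((\<lambda>x. a ^ n * sin (a * x + real n * (pi / 2))) has_real_derivative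
          a ^ Suc n * sin (a * x + real (Suc n) * (pi / 2))) (at x)" for x
  proof -
    have "a * x + real (Suc n) * (pi / 2) = (a * x + real n * (pi / 2)) + pi / 2"
      by (simp add: algebra_simps)
    then have "sin (a * x + real (Suc n) * (pi / 2)) = cos (a * x + real n * (pi / 2))"
      by (simp only: sin_add) simp
    then show ?thesis
      by (auto intro!: derivative_eq_intros simp: mult_ac)
  qed
  then have "deriv (\<lambda>x. a ^ n * sin (a * x + real n * (pi / 2))) =
      (\<lambda>x. a ^ Suc n * sin (a * x + real (Suc n) * (pi / 2)))"
    by (intro ext DERIV_imp_deriv)
  then show ?case
    using Suc by simp
qed simp

lemma higher_deriv_sin_at_0:
  "(deriv ^^ Suc k) (\<lambda>x. sin (a * x)) 0 = a ^ Suc k * cos (real k * (pi / 2))"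
proof -
  have "real (Suc k) * (pi / 2) = real k * (pi / 2) + pi / 2"
    by (simp add: algebra_simps)
  then show ?thesis
    unfolding higher_deriv_sin by (simp only: sin_add) simp
qed

lemma smooth_sin: "smooth (\<lambda>x. sin (a * x))"
proof -
  have "((\<lambda>x. c * sin (a * x + b)) has_real_derivative c * (cos (a * x + b) * a)) (at x)"
    for b c x
    by (auto intro!: derivative_eq_intros)
  then show ?thesis
    unfolding smooth_def higher_deriv_sin real_differentiable_def by blast
qed

lemma loop_sin: "loop (\<lambda>x. sin (2 * pi * real m * x))"
proof -
  have "2 * pi * real m * (x + 1) = 2 * pi * real m * x + 2 * real m * pi" for x
    by (simp add: algebra_simps)
  then show ?thesis
    by (simp add: loop_def smooth_sin sin_add)
qed

lemma loop_const: "loop (\<lambda>x. c)"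
  by (simp add: loop_def smooth_def higher_deriv_const)

lemma polynomial_function_zero_on_positive_nats:
  fixes q :: "nat \<Rightarrow> real"
  assumes "\<And>m. (\<Sum>k\<le>N. q k * real (Suc m) ^ k) = 0" and "k \<le> N"
  shows "q k = 0"
proof -
  define P where "P = (\<Sum>k\<le>N. monom (q k) k)"
  have "range (\<lambda>m. real (Suc m)) \<subseteq> {x. poly P x = 0}"
    using assms by (auto simp: P_def poly_sum poly_monom)
  moreover have "infinite (range (\<lambda>m. real (Suc m)))"
    by (auto simp: inj_def dest: finite_imageD)
  ultimately have "P = 0"
    using poly_roots_finite finite_subset by blast
  moreover have "coeff P k = q k"
    using \<open>k \<le> N\<close> by (simp add: P_def coeff_sum coeff_monom)
  ultimately show ?thesis
    by simp
qed

definition const_jet :: "real \<Rightarrow> nat \<Rightarrow> real" where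
  "const_jet c = (\<lambda>k. if k = 0 then c else 0)"

lemma const_jet_0 [simp]: "const_jet c 0 = c"
  and const_jet_Suc [simp]: "const_jet c (Suc k) = 0"
  and const_jet_upd_0 [simp]: "(const_jet c)(0 := t) = const_jet t"
  by (auto simp: const_jet_def)

lemma jet_const: "jet (\<lambda>x. c) x = const_jet c"
  by (auto simp: jet_def higher_deriv_const const_jet_def)

lemma ev_const: "ev F (\<lambda>x. c) = (\<lambda>x. F (const_jet c))"
  by (simp add: ev_def jet_const)

lemma dp_eval_upd_0_differentiable:
  "is_dpoly P \<Longrightarrow> (\<lambda>t. dp_eval P (j(0 := t))) differentiable at x"
proof (induction P)
  case (Cons cm P)
  obtain c m where cm: "cm = (c, m)"
    by fastforce
  with Cons.prems have "c differentiable at x" "is_dpoly P"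
    by (auto simp: is_dpoly_def smooth_def dest: spec[of _ 0])
  with Cons.IH show ?case
    by (auto simp: dp_eval_def cm intro!: differentiable_add differentiable_mult)
qed (simp add: dp_eval_def)

lemma dp_eval_const_jet_constant:
  assumes "is_dpoly P" and "\<And>c. pd 0 (dp_eval P) (const_jet c) = 0"
  shows "dp_eval P (const_jet c) = dp_eval P (const_jet 0)"
proof -
  have "((\<lambda>t. dp_eval P (const_jet t)) has_real_derivative 0) (at c)" for c
    using dp_eval_upd_0_differentiable[OF assms(1), of "const_jet c" c] assms(2)[of c]
    by (auto simp: pd_def simp flip: DERIV_deriv_iff_real_differentiable)
  then show ?thesis
    using DERIV_isconst_all by blast
qed

lemma frechet_cmult:
  "smooth \<phi> \<Longrightarrow> frechet \<xi> u (\<lambda>x. c * \<phi> x) = (\<lambda>x. c * frechet \<xi> u \<phi> x)"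
  by (simp add: frechet_def higher_deriv_cmult sum_distrib_left mult_ac)

lemma frechet_adj_const_loop:
  assumes "smooth \<phi>"
  shows "frechet_adj \<xi> (\<lambda>x. c) \<phi> x =
    (\<Sum>k\<le>dp_order \<xi>. (-1) ^ k * pd k (dp_eval \<xi>) (const_jet c) * (deriv ^^ k) \<phi> x)"
  by (simp add: frechet_adj_def ev_const higher_deriv_cmult[OF assms] mult.assoc)

lemma bv_op_omega1: "bv_op omega1 u \<phi> = deriv \<phi>"
  by (simp add: bv_op_def omega1_def ev_def)

lemma lie_omega1:
  "lie \<xi> omega1 u \<phi> x = - frechet \<xi> u (deriv \<phi>) x - deriv (frechet_adj \<xi> u \<phi>) x"
  by (simp add: lie_def bv_op_def omega1_def ev_def pd_def)

lemma lie_omega1_const_loop: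
  assumes "smooth \<phi>"
  shows "lie \<xi> omega1 (\<lambda>x. c) \<phi> x =
    - (\<Sum>k\<le>dp_order \<xi>. (1 + (-1) ^ k) * pd k (dp_eval \<xi>) (const_jet c) * (deriv ^^ Suc k) \<phi> x)"
proof -
  have "deriv (frechet_adj \<xi> (\<lambda>x. c) \<phi>) x =
    (\<Sum>k\<le>dp_order \<xi>. (-1) ^ k * pd k (dp_eval \<xi>) (const_jet c) * (deriv ^^ Suc k) \<phi> x)"
    using smooth_imp_field_differentiable[OF assms]
    by (simp add: frechet_adj_const_loop[OF assms, abs_def] field_differentiable_mult)
  then show ?thesis
    by (simp add: lie_omega1 frechet_def ev_const higher_deriv_deriv algebra_simps
        sum.distrib sum_negf)
qed

lemma lie_omega2_const_loop:
  assumes "smooth \<phi>"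
  shows "lie \<xi> (omega2 g) (\<lambda>x. c) \<phi> x =
    deriv g c * dp_eval \<xi> (const_jet c) * deriv \<phi> x + g c * lie \<xi> omega1 (\<lambda>x. c) \<phi> x"
proof -
  have "bv_op (omega2 g) (\<lambda>x. c) \<psi> = (\<lambda>x. g c * deriv \<psi> x)" for \<psi>
    by (simp add: bv_op_def omega2_def ev_const)
  moreover have "pd 0 (\<lambda>j. g (j 0)) (const_jet c) = deriv g c"
    and "pd 0 (\<lambda>j. 1/2 * deriv g (j 0) * j 1) (const_jet c) = 0"
    by (simp_all add: pd_def)
  ultimately have "lie \<xi> (omega2 g) (\<lambda>x. c) \<phi> x =
      deriv g c * dp_eval \<xi> (const_jet c) * deriv \<phi> x
      - frechet \<xi> (\<lambda>x. c) (\<lambda>x. g c * deriv \<phi> x) x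
      - g c * deriv (frechet_adj \<xi> (\<lambda>x. c) \<phi>) x"
    by (simp add: lie_def omega2_def ev_const higher_deriv_const)
  then show ?thesis
    by (simp add: lie_omega1 frechet_cmult[OF smooth_deriv[OF assms]] algebra_simps)
qed

lemma lie_omega1_vanishing_imp_pd_0:
  assumes "\<And>m. lie \<xi> omega1 (\<lambda>x. c) (\<lambda>x. sin (2 * pi * real m * x)) 0 = 0"
  shows "pd 0 (dp_eval \<xi>) (const_jet c) = 0"
proof -
  define q where "q k = (1 + (-1) ^ k) * pd k (dp_eval \<xi>) (const_jet c) *
    (2 * pi) ^ Suc k * cos (real k * (pi / 2))" for k
  have "(\<Sum>k\<le>dp_order \<xi>. q k * real (Suc m) ^ k) = 0" for m
  proof -
    have "- lie \<xi> omega1 (\<lambda>x. c) (\<lambda>x. sin (2 * pi * real (Suc m) * x)) 0 =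
        (\<Sum>k\<le>dp_order \<xi>. (1 + (-1) ^ k) * pd k (dp_eval \<xi>) (const_jet c) *
          ((2 * pi * real (Suc m)) ^ Suc k * cos (real k * (pi / 2))))"
      by (simp only: lie_omega1_const_loop[OF smooth_sin] higher_deriv_sin_at_0)
    also have "\<dots> = real (Suc m) * (\<Sum>k\<le>dp_order \<xi>. q k * real (Suc m) ^ k)"
      unfolding q_def sum_distrib_left power_mult_distrib[of "2 * pi"]
      by (intro sum.cong refl) (simp only: power_Suc mult_ac)
    finally show ?thesis
      using assms[of "Suc m"] by simp
  qed
  then have "q 0 = 0"
    by (rule polynomial_function_zero_on_positive_nats) simp
  then show ?thesis
    by (simp add: q_def)
qed

lemma constant_derivative_imp_affine:
  fixes f :: "real \<Rightarrow> real"
  assumes "\<And>x. (f has_real_derivative k) (at x)"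
  shows "f v = k * v + f 0"
  using DERIV_const_ratio_const[OF _ assms, of 0 v] by (cases "v = 0") (auto simp: algebra_simps)

theorem lemma15:
  fixes g :: "real \<Rightarrow> real"
  assumes "smooth g"
    and "exact_pencil g"
  shows "\<exists>a b. \<forall>v. g v = a * v + b"
proof -
  obtain \<xi> where "is_dpoly \<xi>"
    and lie2: "\<And>u \<phi>. loop u \<Longrightarrow> loop \<phi> \<Longrightarrow> lie \<xi> (omega2 g) u \<phi> = bv_op omega1 u \<phi>"
    and lie1: "\<And>u \<phi>. loop u \<Longrightarrow> loop \<phi> \<Longrightarrow> lie \<xi> omega1 u \<phi> = (\<lambda>x. 0)"
    using assms(2) unfolding exact_pencil_def by blast
  define K where "K = dp_eval \<xi> (const_jet 0)"
  have "pd 0 (dp_eval \<xi>) (const_jet c) = 0" for c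
    using lie1[OF loop_const loop_sin] by (intro lie_omega1_vanishing_imp_pd_0) simp
  then have \<xi>_const: "dp_eval \<xi> (const_jet c) = K" for c
    unfolding K_def by (rule dp_eval_const_jet_constant[OF \<open>is_dpoly \<xi>\<close>])
  have "deriv g c * K = 1" for c
  proof -
    have "deriv (\<lambda>x. sin (2 * pi * x)) 0 = 2 * pi"
      using higher_deriv_sin_at_0[of 0 "2 * pi"] by simp
    then show ?thesis
      using fun_cong[OF lie2[OF loop_const[of c] loop_sin[of 1]], of 0]
        fun_cong[OF lie1[OF loop_const[of c] loop_sin[of 1]], of 0]
      by (simp add: lie_omega2_const_loop smooth_sin \<xi>_const bv_op_omega1)
  qed
  moreover have "(g has_real_derivative deriv g c) (at c)" for c
    using assms(1) unfolding smooth_def DERIV_deriv_iff_real_differentiable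
    by (metis funpow_0)
  ultimately have "(g has_real_derivative 1 / K) (at c)" for c
    by (metis mult.commute nonzero_eq_divide_eq zero_neq_one mult_zero_right)
  then show ?thesis
    using constant_derivative_imp_affine by blast
qed

end
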